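(* For any random variable $\tilde v$ with $\mathbb{P}(\tilde v=v_n)=p_n$, $n=1,\dots,N$ ($N\in\mathbb{N}\cup\{\infty\}$, $v_n$ increasing, $p_n\in(0,1)$, $\sum_np_n=1$), there exists a family of random variables $(\tilde v^\delta)_{\delta>0}$, each taking values in $\{v_1,\dots,v_N\}$, such that (i) for each $\delta>0$ there is a strictly increasing sequence $(a^\delta_n)_{n=1}^{N+1}\subset\delta\mathbb{Z}\cup\{\pm\infty\}$ with $a^\delta_1=-\infty$, $a^\delta_{N+1}=\infty$, $\bigcup_{n=1}^N[a^\delta_n,a^\delta_{n+1})=\delta\mathbb{Z}\cup\{-\infty\}$, $\mathbb{P}(\tilde v^\delta=v_n)=\mathbb{P}^\delta(Z^\delta_1\in[a^\delta_n,a^\delta_{n+1}))$ for all $n$, and $(a^\delta_n+a^\delta_{n+1}-\delta)/2\notin\delta\mathbb{Z}$ for all $n$; (ii) $\tilde v^\delta\to\tilde v$ in law as $\delta\downarrow0$.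
   Context: For $\delta>0$, $\beta^\delta=(2\delta^2)^{-1}$ and $\mathbb{P}^\delta$ is a measure under which $Z^\delta$ is $\delta$ times the difference of two independent Poisson processes of intensity $\beta^\delta$, started at $0$. *)

theory Defs
  imports "HOL-Probability.Probability" "HOL-Library.Extended_Nat"
begin

definition beta_d :: "real \<Rightarrow> real" where
  "beta_d \<delta> = 1 / (2 * \<delta>\<^sup>2)"

text \<open>Law of Z^delta_1 under P^delta: delta times the difference of two independent
  Poisson(beta^delta) variables (the time-1 values of the two Poisson processes).\<close>
definition Z1_law :: "real \<Rightarrow> real pmf" where
  "Z1_law \<delta> = map_pmf (\<lambda>(j, k). \<delta> * (real j - real k))
      (pair_pmf (poisson_pmf (beta_d \<delta>)) (poisson_pmf (beta_d \<delta>)))"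

definition dZ :: "real \<Rightarrow> ereal set" where
  "dZ \<delta> = {ereal (\<delta> * real_of_int k) | k. True}"

definition conv_law :: "('i \<Rightarrow> real measure) \<Rightarrow> real measure \<Rightarrow> 'i filter \<Rightarrow> bool" where
  "conv_law \<mu> \<nu> F \<longleftrightarrow>
     (\<forall>f :: real \<Rightarrow> real. continuous_on UNIV f \<and> bounded (range f) \<longrightarrow>
        ((\<lambda>t. integral\<^sup>L (\<mu> t) f) \<longlongrightarrow> integral\<^sup>L \<nu> f) F)"

end

theory Submission
  imports Defs
begin

text \<open>Write \<open>Z\<^sup>\<delta>\<^sub>1 = \<delta> W\<close> with \<open>W\<close> the difference of two independent Poisson(\<open>\<beta>\<^sup>\<delta>\<close>)
  variables. Poisson weights of rate \<open>l\<close> are at most \<open>2 sqrt (2 / l)\<close>, so every atom of \<open>W\<close> is at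
  most \<open>4 \<delta>\<close>. Put the \<open>n\<close>-th boundary at the even lattice point \<open>2 \<delta> (k\<^sub>n + n)\<close>, where
  \<open>k\<^sub>n\<close> is the least \<open>k\<close> with \<open>P(W < 2 k) \<ge> p\<^sub>1 + \<dots> + p\<^sub>n\<^sub>-\<^sub>1\<close>. Evenness keeps the
  midpoints of the cells off \<open>\<delta>\<int>\<close>, and the shift by \<open>n\<close> makes the boundaries strictly increasing
  while changing \<open>P(Z\<^sup>\<delta>\<^sub>1 < a\<^sub>n)\<close> by only \<open>O(n \<delta>)\<close>. Hence every cell probability tends to
  \<open>p\<^sub>n\<close>, and for laws on \<open>\<nat>\<close> convergence of the weights implies convergence in law.\<close>

lemma pmf_poisson_Suc:
  assumes "0 < l"
  shows "pmf (poisson_pmf l) (Suc k) = pmf (poisson_pmf l) k * (l / Suc k)"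
  using assms by (simp add: field_simps)

lemma pmf_poisson_shift_up:
  assumes l: "0 < l" and k: "real k \<le> l" and s: "real s \<le> l" and i: "i \<le> s"
  shows "pmf (poisson_pmf l) k * (1 - s / l) ^ i \<le> pmf (poisson_pmf l) (k + i)"
  using i
proof (induction i)
  case (Suc i)
  have "1 - s / l = (l - s) / l" using l by (simp add: field_simps)
  also have "\<dots> \<le> l / (l + s)"
    using l s by (simp add: divide_simps) (simp add: algebra_simps)
  also have "\<dots> \<le> l / Suc (k + i)"
    using l k Suc.prems by (intro divide_left_mono) auto
  finally have ratio: "1 - s / l \<le> l / Suc (k + i)" .
  have "pmf (poisson_pmf l) k * (1 - s / l) ^ Suc i
      = pmf (poisson_pmf l) k * (1 - s / l) ^ i * (1 - s / l)" by simp
  also have "\<dots> \<le> pmf (poisson_pmf l) (k + i) * (l / Suc (k + i))"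
    using Suc s l ratio by (intro mult_mono) (auto simp: field_simps)
  also have "\<dots> = pmf (poisson_pmf l) (k + Suc i)" using pmf_poisson_Suc[OF l] by simp
  finally show ?case .
qed simp

lemma pmf_poisson_shift_down:
  assumes l: "0 < l" and k: "l \<le> real k" and s: "real s \<le> l" and i: "i \<le> s"
  shows "pmf (poisson_pmf l) k * (1 - s / l) ^ i \<le> pmf (poisson_pmf l) (k - i)"
  using i
proof (induction i)
  case (Suc i)
  have ki: "k - i = Suc (k - Suc i)" using Suc.prems k s by linarith
  have "l - s \<le> real (k - i)" using k Suc.prems s by linarith
  then have "l * l \<le> l * (s + real (k - i))" using l by (intro mult_left_mono) auto
  then have ratio: "1 - s / l \<le> real (Suc (k - Suc i)) / l"
    using l by (simp add: ki[symmetric] field_simps distrib_left)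
  have "pmf (poisson_pmf l) k * (1 - s / l) ^ Suc i
      = pmf (poisson_pmf l) k * (1 - s / l) ^ i * (1 - s / l)" by simp
  also have "\<dots> \<le> pmf (poisson_pmf l) (k - i) * (real (Suc (k - Suc i)) / l)"
    using Suc s l ratio by (intro mult_mono) (auto simp: field_simps)
  also have "\<dots> = pmf (poisson_pmf l) (k - Suc i)"
    unfolding ki pmf_poisson_Suc[OF l] using l by (simp del: of_nat_Suc)
  finally show ?case .
qed simp

text \<open>From \<open>k\<close>, step \<open>s\<close> times towards the mode: each step multiplies the weight by at least
  \<open>1 - s/l\<close>, and \<open>(1 - s/l)\<^sup>s \<ge> 1/2\<close> by Bernoulli's inequality, so \<open>s + 1\<close> distinct weights are
  at least half the weight at \<open>k\<close>.\<close>

lemma pmf_poisson_le: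
  assumes l: "0 < l" and s: "real s ^ 2 \<le> l / 2"
  shows "pmf (poisson_pmf l) k \<le> 2 / (real s + 1)"
proof -
  have sl: "real s \<le> l"
    using s l by (cases "s = 0") (auto simp: power2_eq_square intro: order_trans[of _ "real s * real s"])
  define x where "x = 1 - real s / l"
  have x: "0 \<le> x" "x \<le> 1" using sl l by (auto simp: x_def field_simps)
  have half: "1 / 2 \<le> x ^ i" if "i \<le> s" for i
  proof -
    have "1 / 2 \<le> 1 + real s * (- (real s / l))"
      using s l by (simp add: field_simps power2_eq_square)
    also have "\<dots> \<le> x ^ s"
      unfolding x_def using Bernoulli_inequality[of "- (real s / l)" s] sl l by (simp add: field_simps)
    also have "\<dots> \<le> x ^ i" using that x by (intro power_decreasing) auto
    finally show ?thesis .
  qed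
  obtain f where f: "inj_on f {..s}" "\<And>i. i \<le> s \<Longrightarrow> pmf (poisson_pmf l) k * x ^ i \<le> pmf (poisson_pmf l) (f i)"
  proof (cases "real k \<le> l")
    case True
    then show ?thesis
      by (intro that[of "\<lambda>i. k + i"]) (auto simp: inj_on_def x_def intro!: pmf_poisson_shift_up sl l)
  next
    case False
    then show ?thesis
      using sl by (intro that[of "\<lambda>i. k - i"]) (auto simp: inj_on_def x_def intro!: pmf_poisson_shift_down l)
  qed
  have "(real s + 1) * (pmf (poisson_pmf l) k / 2) = (\<Sum>i\<le>s. pmf (poisson_pmf l) k * (1 / 2))"
    by simp
  also have "\<dots> \<le> (\<Sum>i\<le>s. pmf (poisson_pmf l) (f i))"
  proof (intro sum_mono)
    fix i assume "i \<in> {..s}"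
    then have "pmf (poisson_pmf l) k * (1 / 2) \<le> pmf (poisson_pmf l) k * x ^ i"
      using half by (intro mult_left_mono) auto
    also have "\<dots> \<le> pmf (poisson_pmf l) (f i)" using f(2) \<open>i \<in> {..s}\<close> by simp
    finally show "pmf (poisson_pmf l) k * (1 / 2) \<le> pmf (poisson_pmf l) (f i)" .
  qed
  also have "\<dots> = measure_pmf.prob (poisson_pmf l) (f ` {..s})"
    using f(1) by (simp add: measure_measure_pmf_finite sum.reindex)
  also have "\<dots> \<le> 1" by (rule measure_pmf.prob_le_1)
  finally show ?thesis by (simp add: field_simps)
qed

lemma pmf_poisson_le_sqrt:
  assumes l: "0 < l"
  shows "pmf (poisson_pmf l) k \<le> 2 * sqrt (2 / l)"
proof -
  define s where "s = nat \<lfloor>sqrt (l / 2)\<rfloor>"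
  have lt: "sqrt (l / 2) < real s + 1" using l unfolding s_def by linarith
  have "real s \<le> sqrt (l / 2)" using l by (simp add: s_def)
  then have "real s ^ 2 \<le> sqrt (l / 2) ^ 2" by (intro power_mono) auto
  then have "real s ^ 2 \<le> l / 2" using l by simp
  then have "pmf (poisson_pmf l) k \<le> 2 / (real s + 1)" by (rule pmf_poisson_le[OF l])
  also have "\<dots> \<le> 2 / sqrt (l / 2)" using lt l by (intro divide_left_mono) auto
  also have "\<dots> = 2 * sqrt (2 / l)" using l by (simp add: real_sqrt_divide field_simps)
  finally show ?thesis .
qed

lemma pmf_poisson_beta_d_le:
  assumes "0 < \<delta>"
  shows "pmf (poisson_pmf (beta_d \<delta>)) k \<le> 4 * \<delta>"
proof -
  have "sqrt (2 / beta_d \<delta>) = 2 * \<delta>"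
    using assms by (simp add: beta_d_def power2_eq_square real_sqrt_mult)
  then show ?thesis using pmf_poisson_le_sqrt[of "beta_d \<delta>" k] assms by (simp add: beta_d_def)
qed

definition poisson_diff_pmf :: "real \<Rightarrow> int pmf" where
  "poisson_diff_pmf l = map_pmf (\<lambda>(j, k). int j - int k) (pair_pmf (poisson_pmf l) (poisson_pmf l))"

lemma Z1_law_eq: "Z1_law \<delta> = map_pmf (\<lambda>w. \<delta> * of_int w) (poisson_diff_pmf (beta_d \<delta>))"
  unfolding Z1_law_def poisson_diff_pmf_def map_pmf_comp by (intro map_pmf_cong) auto

lemma pmf_map_diff_pair_le:
  assumes B: "\<And>k. pmf B k \<le> e"
  shows "pmf (map_pmf (\<lambda>(j, k). int j - int k) (pair_pmf A B)) w \<le> e"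
proof -
  have e: "0 \<le> e" using B[of 0] pmf_nonneg[of B 0] by linarith
  have "pmf (map_pmf (\<lambda>k. int j - int k) B) w \<le> e" for j
  proof -
    have "pmf (map_pmf (\<lambda>k. int j - int k) B) w = measure_pmf.prob B ((\<lambda>k. int j - int k) -` {w})"
      by (rule pmf_map)
    also have "\<dots> \<le> measure_pmf.prob B {nat (int j - w)}"
      by (intro measure_pmf.finite_measure_mono) auto
    also have "\<dots> \<le> e" using B by (simp add: measure_pmf_single)
    finally show ?thesis .
  qed
  then have "(\<integral>\<^sup>+j. pmf (map_pmf (\<lambda>k. int j - int k) B) w \<partial>measure_pmf A) \<le> (\<integral>\<^sup>+j. e \<partial>measure_pmf A)"
    by (intro nn_integral_mono ennreal_leI)
  moreover have "map_pmf (\<lambda>(j, k). int j - int k) (pair_pmf A B) = bind_pmf A (\<lambda>j. map_pmf (\<lambda>k. int j - int k) B)"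
    unfolding pair_pmf_def map_bind_pmf by (simp add: map_bind_pmf bind_return_pmf map_pmf_def)
  ultimately show ?thesis
    using e by (simp add: ennreal_pmf_bind[symmetric] measure_pmf.emeasure_space_1)
qed

lemma pmf_poisson_diff_beta_d_le: "0 < \<delta> \<Longrightarrow> pmf (poisson_diff_pmf (beta_d \<delta>)) w \<le> 4 * \<delta>"
  unfolding poisson_diff_pmf_def by (intro pmf_map_diff_pair_le pmf_poisson_beta_d_le)

lemma prob_atLeastLessThan_le:
  fixes W :: "int pmf"
  assumes "\<And>w. pmf W w \<le> e" and "s \<le> t"
  shows "measure_pmf.prob W {s..<t} \<le> of_int (t - s) * e"
proof -
  have "measure_pmf.prob W {s..<t} = (\<Sum>w\<in>{s..<t}. pmf W w)"
    by (simp add: measure_measure_pmf_finite)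
  also have "\<dots> \<le> (\<Sum>w\<in>{s..<t}. e)" using assms(1) by (intro sum_mono)
  finally show ?thesis using assms(2) by simp
qed

definition quantile :: "(int \<Rightarrow> real) \<Rightarrow> real \<Rightarrow> int" where
  "quantile F c = (SOME k. F (k - 1) < c \<and> c \<le> F k)"

lemma quantile_bounds:
  assumes F: "mono F" and s: "F s < c" and t: "c \<le> F t"
  shows "F (quantile F c - 1) < c" and "c \<le> F (quantile F c)"
proof -
  have "s < t" using s t monoD[OF F, of t s] by force
  define n where "n = (LEAST n. c \<le> F (s + int n))"
  have ex: "c \<le> F (s + int (nat (t - s)))" using t \<open>s < t\<close> by simp
  have n: "c \<le> F (s + int n)" unfolding n_def by (rule LeastI[where P = "\<lambda>n. c \<le> F (s + int n)", OF ex])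
  then have "n \<noteq> 0" using s by (intro notI) simp
  then have "\<not> c \<le> F (s + int (n - 1))" unfolding n_def by (intro not_less_Least) simp
  moreover have "s + int (n - 1) = s + int n - 1" using \<open>n \<noteq> 0\<close> by simp
  ultimately have "F (s + int n - 1) < c \<and> c \<le> F (s + int n)" using n by (simp add: add_diff_eq)
  then have "\<exists>k. F (k - 1) < c \<and> c \<le> F k" by blast
  from someI_ex[OF this] show "F (quantile F c - 1) < c" "c \<le> F (quantile F c)"
    unfolding quantile_def by auto
qed

lemma quantile_mono:
  assumes F: "mono F" and s: "F s < c" and cc': "c \<le> c'" and t: "c' \<le> F t"
  shows "quantile F c \<le> quantile F c'"
proof (rule ccontr)
  assume "\<not> quantile F c \<le> quantile F c'"
  then have "F (quantile F c') \<le> F (quantile F c - 1)" by (intro monoD[OF F]) simp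
  moreover have "F (quantile F c - 1) < c" using quantile_bounds(1)[OF F s order_trans[OF cc' t]] .
  moreover have "c' \<le> F (quantile F c')" using quantile_bounds(2)[OF F order_less_le_trans[OF s cc'] t] .
  ultimately show False using cc' by simp
qed

definition even_quantile :: "int pmf \<Rightarrow> real \<Rightarrow> int" where
  "even_quantile W = quantile (\<lambda>k. measure_pmf.prob W {..<2 * k})"

lemma mono_prob_lessThan_even: "mono (\<lambda>k. measure_pmf.prob (W :: int pmf) {..<2 * k})"
  by (intro monoI measure_pmf.finite_measure_mono) auto

lemma ex_prob_lessThan_even_less:
  fixes W :: "int pmf"
  assumes "0 < c"
  obtains s where "measure_pmf.prob W {..<2 * s} < c"
proof -
  have "(\<lambda>n. measure_pmf.prob W {..<2 * - int n}) \<longlonglongrightarrow> measure_pmf.prob W (\<Inter>n. {..<2 * - int n})"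
    by (intro measure_pmf.finite_Lim_measure_decseq) (auto simp: decseq_def)
  moreover have "(\<Inter>n. {..<2 * - int n}) = {}"
  proof -
    have "w \<notin> {..<2 * - int (nat (- w))}" for w by simp
    then show ?thesis by blast
  qed
  ultimately have "\<forall>\<^sub>F n in sequentially. measure_pmf.prob W {..<2 * - int n} < c"
    using assms by (intro order_tendstoD) auto
  then obtain n where "measure_pmf.prob W {..<2 * - int n} < c"
    by (auto simp: eventually_sequentially)
  then show ?thesis by (rule that)
qed

lemma ex_prob_lessThan_even_ge:
  fixes W :: "int pmf"
  assumes "c < 1"
  obtains t where "c \<le> measure_pmf.prob W {..<2 * t}"
proof -
  have "(\<lambda>n. measure_pmf.prob W {..<2 * int n}) \<longlonglongrightarrow> measure_pmf.prob W (\<Union>n. {..<2 * int n})"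
    by (intro measure_pmf.finite_Lim_measure_incseq) (auto simp: incseq_def)
  moreover have "(\<Union>n. {..<2 * int n}) = UNIV"
  proof -
    have "w \<in> {..<2 * int (Suc (nat w))}" for w by simp
    then show ?thesis by blast
  qed
  ultimately have "\<forall>\<^sub>F n in sequentially. c < measure_pmf.prob W {..<2 * int n}"
    using assms measure_pmf.prob_space by (intro order_tendstoD) auto
  then obtain n where "c < measure_pmf.prob W {..<2 * int n}"
    by (auto simp: eventually_sequentially)
  then show ?thesis using that[of "int n"] by simp
qed

lemma even_quantile_bounds:
  assumes "0 < c" "c < 1"
  shows "measure_pmf.prob W {..<2 * even_quantile W c - 2} < c"
    and "c \<le> measure_pmf.prob W {..<2 * even_quantile W c}"
proof -
  obtain s t where "measure_pmf.prob W {..<2 * s} < c" "c \<le> measure_pmf.prob W {..<2 * t}"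
    using ex_prob_lessThan_even_less[OF assms(1)] ex_prob_lessThan_even_ge[OF assms(2)] by metis
  from quantile_bounds[OF mono_prob_lessThan_even this]
  show "measure_pmf.prob W {..<2 * even_quantile W c - 2} < c"
    and "c \<le> measure_pmf.prob W {..<2 * even_quantile W c}"
    unfolding even_quantile_def by (simp_all add: algebra_simps)
qed

lemma even_quantile_mono:
  assumes "0 < c" "c \<le> c'" "c' < 1"
  shows "even_quantile W c \<le> even_quantile W c'"
proof -
  obtain s t where "measure_pmf.prob W {..<2 * s} < c" "c' \<le> measure_pmf.prob W {..<2 * t}"
    using ex_prob_lessThan_even_less[OF assms(1)] ex_prob_lessThan_even_ge[OF assms(3)] by metis
  then show ?thesis
    unfolding even_quantile_def using assms(2) by (intro quantile_mono[OF mono_prob_lessThan_even])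
qed

lemma prob_lessThan_even_quantile_bounds:
  fixes W :: "int pmf" and j :: nat
  assumes e: "\<And>w. pmf W w \<le> e" and c: "0 < c" "c < 1"
  defines "t \<equiv> 2 * (even_quantile W c + int j)"
  shows "c \<le> measure_pmf.prob W {..<t}" and "measure_pmf.prob W {..<t} \<le> c + (2 * real j + 2) * e"
proof -
  define k where "k = even_quantile W c"
  have "c \<le> measure_pmf.prob W {..<2 * k}" unfolding k_def by (rule even_quantile_bounds(2)[OF c])
  also have "\<dots> \<le> measure_pmf.prob W {..<t}"
    unfolding t_def k_def by (intro measure_pmf.finite_measure_mono) auto
  finally show "c \<le> measure_pmf.prob W {..<t}" .
  have "{..<t} = {..<2 * k - 2} \<union> {2 * k - 2..<t}" unfolding t_def k_def by auto
  then have "measure_pmf.prob W {..<t}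
      = measure_pmf.prob W {..<2 * k - 2} + measure_pmf.prob W {2 * k - 2..<t}"
    by (simp add: measure_pmf.finite_measure_Union ivl_disj_int)
  also have "\<dots> \<le> c + of_int (t - (2 * k - 2)) * e"
    using even_quantile_bounds(1)[OF c, of W] unfolding k_def[symmetric]
    by (intro add_mono prob_atLeastLessThan_le e) (auto simp: t_def k_def)
  also have "of_int (t - (2 * k - 2)) = 2 * real j + 2" by (simp add: t_def k_def)
  finally show "measure_pmf.prob W {..<t} \<le> c + (2 * real j + 2) * e" by simp
qed

lemma expectation_pmf_tail_bound:
  fixes R :: "nat pmf" and g :: "nat \<Rightarrow> real"
  assumes bnd: "\<And>n. \<bar>g n\<bar> \<le> B"
  shows "\<bar>measure_pmf.expectation R g - (\<Sum>n\<le>M. g n * pmf R n)\<bar> \<le> B * (1 - measure_pmf.prob R {..M})"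
proof -
  have int: "integrable (measure_pmf R) f" if "\<And>n. \<bar>f n\<bar> \<le> B" for f :: "nat \<Rightarrow> real"
    using that by (intro measure_pmf.integrable_const_bound[where B = B]) auto
  have B: "0 \<le> B" using bnd[of 0] by simp
  define tail where "tail n = g n * indicator (- {..M}) n" for n
  have "measure_pmf.expectation R g
      = measure_pmf.expectation R (\<lambda>n. g n * indicator {..M} n) + measure_pmf.expectation R tail"
    using bnd B by (subst Bochner_Integration.integral_add[symmetric])
      (auto intro!: int Bochner_Integration.integral_cong simp: tail_def indicator_def)
  also have "measure_pmf.expectation R (\<lambda>n. g n * indicator {..M} n) = (\<Sum>n\<le>M. g n * pmf R n)"
    by (subst integral_measure_pmf_real[where A = "{..M}"]) (auto intro!: sum.cong simp: indicator_def)
  finally have "\<bar>measure_pmf.expectation R g - (\<Sum>n\<le>M. g n * pmf R n)\<bar> = \<bar>measure_pmf.expectation R tail\<bar>"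
    by simp
  also have "\<dots> \<le> measure_pmf.expectation R (\<lambda>n. \<bar>tail n\<bar>)"
    using integral_norm_bound[of R tail] by simp
  also have "\<dots> \<le> measure_pmf.expectation R (\<lambda>n. B * indicator (- {..M}) n)"
    using bnd B by (intro integral_mono int) (auto simp: tail_def indicator_def abs_mult)
  also have "\<dots> = B * (1 - measure_pmf.prob R {..M})"
    using measure_pmf.prob_compl[of "{..M}" R] by (simp add: Compl_eq_Diff_UNIV)
  finally show ?thesis .
qed

lemma ex_prob_atMost_gt:
  fixes P :: "nat pmf"
  assumes "0 < e"
  shows "\<exists>M. 1 - e < measure_pmf.prob P {..M}"
proof -
  have "(\<lambda>M. measure_pmf.prob P {..M}) \<longlonglongrightarrow> measure_pmf.prob P (\<Union>M. {..M})"
    by (intro measure_pmf.finite_Lim_measure_incseq) (auto simp: incseq_def)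
  then have "(\<lambda>M. measure_pmf.prob P {..M}) \<longlonglongrightarrow> 1" by (simp add: UN_atMost_UNIV)
  then have "\<forall>\<^sub>F M in sequentially. 1 - e < measure_pmf.prob P {..M}"
    using assms by (intro order_tendstoD) auto
  then show ?thesis by (auto simp: eventually_sequentially)
qed

text \<open>Tightness comes for free: the mass of \<open>{..M}\<close> under \<open>Q t\<close> is a finite sum of
  converging weights.\<close>

lemma tendsto_expectation_pmf_nat:
  fixes Q :: "'i \<Rightarrow> nat pmf" and P :: "nat pmf" and g :: "nat \<Rightarrow> real"
  assumes conv: "\<And>n. ((\<lambda>t. pmf (Q t) n) \<longlongrightarrow> pmf P n) F"
    and bnd: "\<And>n. \<bar>g n\<bar> \<le> B"
  shows "((\<lambda>t. measure_pmf.expectation (Q t) g) \<longlongrightarrow> measure_pmf.expectation P g) F"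
proof (rule tendstoI)
  fix \<epsilon> :: real assume "0 < \<epsilon>"
  have B: "0 \<le> B" using bnd[of 0] by simp
  define e where "e = \<epsilon> / (4 * (B + 1))"
  have e: "0 < e" "B * e < \<epsilon> / 4"
    using \<open>0 < \<epsilon>\<close> B by (auto simp: e_def field_simps)
  obtain M where M_large: "1 - e < measure_pmf.prob P {..M}"
    using ex_prob_atMost_gt[OF e(1)] by blast
  have "((\<lambda>t. \<Sum>n\<le>M. pmf (Q t) n) \<longlongrightarrow> (\<Sum>n\<le>M. pmf P n)) F"
    by (intro tendsto_sum conv)
  then have "\<forall>\<^sub>F t in F. 1 - e < measure_pmf.prob (Q t) {..M}"
    using M_large by (intro order_tendstoD) (simp_all add: measure_measure_pmf_finite)
  moreover have "((\<lambda>t. \<Sum>n\<le>M. g n * pmf (Q t) n) \<longlongrightarrow> (\<Sum>n\<le>M. g n * pmf P n)) F"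
    by (intro tendsto_sum tendsto_mult tendsto_const conv)
  then have "\<forall>\<^sub>F t in F. dist (\<Sum>n\<le>M. g n * pmf (Q t) n) (\<Sum>n\<le>M. g n * pmf P n) < \<epsilon> / 2"
    using \<open>0 < \<epsilon>\<close> by (intro tendstoD) auto
  ultimately show "\<forall>\<^sub>F t in F. dist (measure_pmf.expectation (Q t) g) (measure_pmf.expectation P g) < \<epsilon>"
  proof eventually_elim
    case (elim t)
    have "B * (1 - measure_pmf.prob (Q t) {..M}) \<le> B * e" "B * (1 - measure_pmf.prob P {..M}) \<le> B * e"
      using elim(1) M_large B by (intro mult_left_mono; simp)+
    moreover have "\<bar>measure_pmf.expectation (Q t) g - (\<Sum>n\<le>M. g n * pmf (Q t) n)\<bar>
        \<le> B * (1 - measure_pmf.prob (Q t) {..M})"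
      by (rule expectation_pmf_tail_bound[OF bnd])
    moreover have "\<bar>measure_pmf.expectation P g - (\<Sum>n\<le>M. g n * pmf P n)\<bar>
        \<le> B * (1 - measure_pmf.prob P {..M})"
      by (rule expectation_pmf_tail_bound[OF bnd])
    moreover have "\<bar>(\<Sum>n\<le>M. g n * pmf (Q t) n) - (\<Sum>n\<le>M. g n * pmf P n)\<bar> < \<epsilon> / 2"
      using elim(2) by (simp add: dist_real_def)
    ultimately show ?case
      using e(2) unfolding dist_real_def abs_le_iff abs_less_iff by linarith
  qed
qed

lemma pmf_map_inj_on:
  assumes "inj_on f A" "set_pmf M \<subseteq> A" "x \<in> A"
  shows "pmf (map_pmf f M) (f x) = pmf M x"
proof -
  have "f -` {f x} \<inter> set_pmf M = {x} \<inter> set_pmf M"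
    using assms by (auto dest: inj_onD)
  then show ?thesis
    by (metis measure_Int_set_pmf measure_pmf_single pmf_map)
qed

lemma emeasure_UN_level_sets:
  fixes M :: "'a measure" and X :: "'a \<Rightarrow> real" and P :: "'b pmf"
  assumes "prob_space M" and X: "X \<in> borel_measurable M" and inj: "inj_on v (set_pmf P)"
    and level: "\<And>n. n \<in> set_pmf P \<Longrightarrow> measure M {\<omega> \<in> space M. X \<omega> = v n} = pmf P n"
    and S: "S \<subseteq> set_pmf P"
  shows "(\<Union>n\<in>S. {\<omega> \<in> space M. X \<omega> = v n}) \<in> sets M"
    and "emeasure M (\<Union>n\<in>S. {\<omega> \<in> space M. X \<omega> = v n}) = emeasure P S"
proof -
  interpret prob_space M by fact
  define E where "E n = {\<omega> \<in> space M. X \<omega> = v n}" for n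
  have E: "E n \<in> sets M" for n unfolding E_def using X by measurable
  have "countable S" using S countable_set_pmf countable_subset by blast
  then show "(\<Union>n\<in>S. {\<omega> \<in> space M. X \<omega> = v n}) \<in> sets M"
    using E unfolding E_def by (intro sets.countable_UN'') auto
  have "disjoint_family_on E S"
    using S unfolding disjoint_family_on_def E_def by (force dest: inj_onD[OF inj])
  then have "emeasure M (\<Union>(E ` S)) = (\<integral>\<^sup>+n. emeasure M (E n) \<partial>count_space S)"
    using E \<open>countable S\<close> by (intro emeasure_UN_countable) auto
  also have "\<dots> = (\<integral>\<^sup>+n. pmf P n \<partial>count_space S)"
    using level S by (intro nn_integral_cong) (auto simp: emeasure_eq_measure E_def)
  finally show "emeasure M (\<Union>n\<in>S. {\<omega> \<in> space M. X \<omega> = v n}) = emeasure P S"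
    by (simp add: nn_integral_pmf E_def)
qed

lemma distr_eq_distr_pmf:
  fixes M :: "'a measure" and X :: "'a \<Rightarrow> real" and P :: "'b pmf"
  assumes "prob_space M" and X: "X \<in> borel_measurable M" and inj: "inj_on v (set_pmf P)"
    and level: "\<And>n. n \<in> set_pmf P \<Longrightarrow> measure M {\<omega> \<in> space M. X \<omega> = v n} = pmf P n"
  shows "distr M borel X = distr (measure_pmf P) borel v"
proof (rule measure_eqI)
  interpret prob_space M by fact
  define E where "E S = (\<Union>n\<in>S. {\<omega> \<in> space M. X \<omega> = v n})" for S
  note E = emeasure_UN_level_sets[OF \<open>prob_space M\<close> X inj level, folded E_def]
  have "emeasure M (E (set_pmf P)) = 1"
    using E(2)[of "set_pmf P"] emeasure_Int_set_pmf[of P UNIV] by (simp add: measure_pmf.emeasure_space_1)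
  then have AE: "AE \<omega> in M. \<omega> \<in> E (set_pmf P)"
    using prob_eq_1[OF E(1)[of "set_pmf P"]] by (simp add: emeasure_eq_measure)
  show "sets (distr M borel X) = sets (distr (measure_pmf P) borel v)" by simp
  fix A assume "A \<in> sets (distr M borel X)"
  then have A: "A \<in> sets borel" by simp
  have "emeasure (distr M borel X) A = emeasure M (X -` A \<inter> space M)"
    using A X by (simp add: emeasure_distr)
  also have "\<dots> = emeasure M (E (set_pmf P \<inter> v -` A))"
  proof (rule emeasure_eq_AE)
    show "AE \<omega> in M. \<omega> \<in> X -` A \<inter> space M \<longleftrightarrow> \<omega> \<in> E (set_pmf P \<inter> v -` A)"
      using AE by eventually_elim (auto simp: E_def)
  qed (use A X E(1)[of "set_pmf P \<inter> v -` A"] in auto)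
  also have "\<dots> = emeasure P (v -` A \<inter> set_pmf P)"
    by (subst E(2)) (auto simp: Int_commute)
  also have "\<dots> = emeasure (distr (measure_pmf P) borel v) A"
    using A by (simp add: emeasure_Int_set_pmf emeasure_distr)
  finally show "emeasure (distr M borel X) A = emeasure (distr (measure_pmf P) borel v) A" .
qed

lemma conv_law_map_pmf:
  fixes Q :: "'i \<Rightarrow> nat pmf" and P :: "nat pmf" and v :: "nat \<Rightarrow> real"
  assumes "\<And>n. ((\<lambda>t. pmf (Q t) n) \<longlongrightarrow> pmf P n) F"
  shows "conv_law (\<lambda>t. measure_pmf (map_pmf v (Q t))) (distr (measure_pmf P) borel v) F"
  unfolding conv_law_def
proof (intro allI impI)
  fix f :: "real \<Rightarrow> real" assume f: "continuous_on UNIV f \<and> bounded (range f)"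
  then obtain B where "\<And>x. \<bar>f x\<bar> \<le> B" by (auto simp: bounded_iff)
  then have "((\<lambda>t. measure_pmf.expectation (Q t) (\<lambda>n. f (v n)))
      \<longlongrightarrow> measure_pmf.expectation P (\<lambda>n. f (v n))) F"
    by (intro tendsto_expectation_pmf_nat assms)
  moreover have "f \<in> borel_measurable borel" using f by (intro borel_measurable_continuous_onI) auto
  ultimately show "((\<lambda>t. integral\<^sup>L (map_pmf v (Q t)) f) \<longlongrightarrow> integral\<^sup>L (distr (measure_pmf P) borel v) f) F"
    by (simp add: integral_distr)
qed

lemma nn_integral_count_space_has_sum:
  fixes f :: "'a \<Rightarrow> real"
  assumes sum: "(f has_sum s) A" and nonneg: "\<And>x. x \<in> A \<Longrightarrow> 0 \<le> f x"
  shows "(\<integral>\<^sup>+x. ennreal (f x) \<partial>count_space A) = ennreal s"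
proof -
  have "(\<lambda>x. norm (f x)) summable_on A"
    using has_sum_imp_summable[OF sum] nonneg by (subst summable_on_cong[where g = f]) auto
  then have abs: "Infinite_Set_Sum.abs_summable_on f A" by (simp add: abs_summable_equivalent[symmetric])
  have "(\<integral>\<^sup>+x. ennreal (f x) \<partial>count_space A) = ennreal (infsetsum f A)"
    by (rule nn_integral_conv_infsetsum[OF abs nonneg])
  also have "infsetsum f A = s" using infsetsum_infsum[OF abs] infsumI[OF sum] by simp
  finally show ?thesis .
qed

lemma enat_Suc_le_plus_1_iff: "enat (Suc n) \<le> N + 1 \<longleftrightarrow> enat n \<le> N"
  by (cases N) (auto simp: one_enat_def)

lemma half_odd_notin_dZ:
  assumes "0 < \<delta>"
  shows "ereal (\<delta> * (of_int m - 1 / 2)) \<notin> dZ \<delta>"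
proof
  assume "ereal (\<delta> * (of_int m - 1 / 2)) \<in> dZ \<delta>"
  then obtain k where "\<delta> * (of_int m - 1 / 2) = \<delta> * of_int k" by (auto simp: dZ_def)
  then have "of_int m - 1 / 2 = (of_int k :: real)" using assms by simp
  then have "of_int (2 * (m - k)) = (1 :: real)" by (simp add: algebra_simps)
  then have "2 * (m - k) = 1" by linarith
  then show False by presburger
qed

lemma two_le_enat_of_has_sum:
  fixes N :: enat and p :: "nat \<Rightarrow> real"
  assumes "1 \<le> N" "\<And>n. 1 \<le> n \<Longrightarrow> enat n \<le> N \<Longrightarrow> p n < 1"
    and "(p has_sum 1) {n. 1 \<le> n \<and> enat n \<le> N}"
  shows "2 \<le> N"
proof (rule ccontr)
  assume "\<not> 2 \<le> N"
  then have "N = 1" using assms(1) by (cases N) (auto simp: one_enat_def numeral_eq_enat)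
  then have "{n. 1 \<le> n \<and> enat n \<le> N} = {1}" by (auto simp: one_enat_def)
  then have "p 1 = 1" using assms(3) has_sum_unique has_sum_finite[of "{1}" p] by fastforce
  then show False using assms(2)[of 1] \<open>N = 1\<close> by (simp add: one_enat_def)
qed

text \<open>The index \<open>n\<close> stands for the value \<open>v\<^sub>n\<close>, so \<open>target\<close> is the law of the index of
  \<open>\<tilde>v\<close> and \<open>boundary \<delta> n\<close> is \<open>a\<^sup>\<delta>\<^sub>n\<close>.\<close>

locale discrete_law =
  fixes N :: enat and p :: "nat \<Rightarrow> real"
  assumes two_le_N: "2 \<le> N"
    and p_pos: "\<And>n. 1 \<le> n \<Longrightarrow> enat n \<le> N \<Longrightarrow> 0 < p n"
    and p_has_sum: "(p has_sum 1) {n. 1 \<le> n \<and> enat n \<le> N}"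
begin

abbreviation indices :: "nat set" where
  "indices \<equiv> {n. 1 \<le> n \<and> enat n \<le> N}"

lemma one_in_indices: "1 \<in> indices" and two_in_indices: "2 \<in> indices"
  using two_le_N by (auto simp: numeral_eq_enat one_enat_def intro: order_trans[rotated])

definition target :: "nat pmf" where
  "target = embed_pmf (\<lambda>n. if n \<in> indices then p n else 0)"

lemma pmf_target: "pmf target n = (if n \<in> indices then p n else 0)"
proof -
  have "(\<integral>\<^sup>+n. ennreal (if n \<in> indices then p n else 0) \<partial>count_space UNIV)
      = (\<integral>\<^sup>+n. ennreal (p n) \<partial>count_space indices)"
    by (subst nn_integral_count_space_indicator) (auto intro!: nn_integral_cong split: split_indicator)
  also have "\<dots> = 1"
    using nn_integral_count_space_has_sum[OF p_has_sum] p_pos by (simp add: less_imp_le)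
  finally show ?thesis
    unfolding target_def using p_pos by (intro pmf_embed_pmf) (auto simp: less_imp_le)
qed

lemma set_pmf_target: "set_pmf target = indices"
proof -
  have "pmf target n \<noteq> 0 \<longleftrightarrow> n \<in> indices" for n
    using p_pos[of n] by (auto simp: pmf_target)
  then show ?thesis unfolding set_eq_iff set_pmf_iff by blast
qed

definition cum :: "nat \<Rightarrow> real" where
  "cum n = measure_pmf.prob target {..<n}"

lemma cum_Suc: "cum (Suc n) = cum n + pmf target n"
  by (simp add: cum_def measure_measure_pmf_finite)

lemma cum_1: "cum 1 = 0"
  by (simp add: cum_def measure_measure_pmf_finite pmf_target)

lemma cum_mono: "m \<le> n \<Longrightarrow> cum m \<le> cum n"
  unfolding cum_def by (intro measure_pmf.finite_measure_mono) auto

lemma cum_pos: "2 \<le> n \<Longrightarrow> 0 < cum n"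
  using cum_mono[of 2 n] cum_Suc[of 1] cum_1 one_in_indices p_pos[of 1]
  by (simp add: numeral_2_eq_2 pmf_target)

lemma cum_less_1: "n \<in> indices \<Longrightarrow> cum n < 1"
  using cum_Suc[of n] measure_pmf.prob_le_1[of target "{..<Suc n}"] p_pos[of n]
  by (simp add: cum_def pmf_target)

lemma cum_last:
  assumes "N = enat K"
  shows "cum (K + 1) = 1"
proof -
  have "set_pmf target \<subseteq> {..<K + 1}" unfolding set_pmf_target using assms by auto
  then show ?thesis
    unfolding cum_def by (simp add: measure_pmf.prob_eq_1 AE_measure_pmf_iff subset_eq)
qed

definition lattice_index :: "real \<Rightarrow> nat \<Rightarrow> int" where
  "lattice_index \<delta> n = even_quantile (poisson_diff_pmf (beta_d \<delta>)) (cum n) + int n"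

definition boundary :: "real \<Rightarrow> nat \<Rightarrow> ereal" where
  "boundary \<delta> n = (if n \<le> 1 then -\<infinity>
     else if enat n \<le> N then ereal (\<delta> * of_int (2 * lattice_index \<delta> n)) else \<infinity>)"

lemma boundary_in_lattice: "boundary \<delta> n \<in> dZ \<delta> \<union> {-\<infinity>, \<infinity>}"
proof -
  have "ereal (\<delta> * of_int (2 * lattice_index \<delta> n)) \<in> dZ \<delta>" unfolding dZ_def by blast
  then show ?thesis unfolding boundary_def by auto
qed

lemma boundary_1: "boundary \<delta> 1 = -\<infinity>"
  by (simp add: boundary_def)

lemma boundary_finite:
  "2 \<le> n \<Longrightarrow> n \<in> indices \<Longrightarrow> boundary \<delta> n = ereal (\<delta> * of_int (2 * lattice_index \<delta> n))"
  by (simp add: boundary_def)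

lemma boundary_last:
  assumes "N = enat K"
  shows "boundary \<delta> (K + 1) = \<infinity>"
proof -
  have "\<not> enat (K + 1) \<le> N" "\<not> K + 1 \<le> 1" using two_le_N assms by (auto simp: numeral_eq_enat)
  then show ?thesis unfolding boundary_def by simp
qed

lemma even_quantile_cum_mono:
  assumes "2 \<le> m" "m \<le> n" "n \<in> indices"
  shows "even_quantile W (cum m) \<le> even_quantile W (cum n)"
  using assms by (intro even_quantile_mono cum_pos cum_mono cum_less_1) auto

lemma lattice_index_less:
  "2 \<le> m \<Longrightarrow> m < n \<Longrightarrow> n \<in> indices \<Longrightarrow> lattice_index \<delta> m < lattice_index \<delta> n"
  using even_quantile_cum_mono[of m n "poisson_diff_pmf (beta_d \<delta>)"] by (simp add: lattice_index_def)

lemma lattice_index_ge: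
  "2 \<le> n \<Longrightarrow> n \<in> indices \<Longrightarrow> lattice_index \<delta> 2 + int n \<le> lattice_index \<delta> n + 2"
  using even_quantile_cum_mono[of 2 n "poisson_diff_pmf (beta_d \<delta>)"] by (simp add: lattice_index_def)

lemma strict_mono_boundary:
  assumes "0 < \<delta>"
  shows "strict_mono_on {n. 1 \<le> n \<and> enat n \<le> N + 1} (boundary \<delta>)"
proof (rule strict_mono_onI)
  fix m n assume m: "m \<in> {n. 1 \<le> n \<and> enat n \<le> N + 1}" and n: "n \<in> {n. 1 \<le> n \<and> enat n \<le> N + 1}"
    and "m < n"
  then have "enat (Suc m) \<le> N + 1" using order_trans[of "enat (Suc m)" "enat n" "N + 1"] by simp
  then have "enat m \<le> N" by (simp only: enat_Suc_le_plus_1_iff)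
  show "boundary \<delta> m < boundary \<delta> n"
  proof (cases "m = 1 \<or> \<not> enat n \<le> N")
    case True
    then show ?thesis using m \<open>m < n\<close> \<open>enat m \<le> N\<close> by (auto simp: boundary_def)
  next
    case False
    then show ?thesis
      using \<open>m < n\<close> m \<open>enat m \<le> N\<close> lattice_index_less[of m n \<delta>] assms by (auto simp: boundary_def)
  qed
qed

lemma boundary_mono:
  assumes "0 < \<delta>" "1 \<le> m" "m \<le> n" "enat n \<le> N + 1"
  shows "boundary \<delta> m \<le> boundary \<delta> n"
proof -
  have "enat m \<le> N + 1" using order_trans[of "enat m" "enat n" "N + 1"] assms(3,4) by simp
  then show ?thesis using strict_mono_on_leD[OF strict_mono_boundary[OF assms(1)], of m n] assms by auto
qed

lemma boundary_midpoint_notin_lattice: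
  assumes "0 < \<delta>" "n \<in> indices"
  shows "(boundary \<delta> n + boundary \<delta> (Suc n) - ereal \<delta>) / 2 \<notin> dZ \<delta>"
proof (cases "n = 1 \<or> \<not> enat (Suc n) \<le> N")
  case True
  then show ?thesis using assms by (auto simp: boundary_def dZ_def)
next
  case False
  then have "(boundary \<delta> n + boundary \<delta> (Suc n) - ereal \<delta>) / 2
      = ereal (\<delta> * (of_int (lattice_index \<delta> n + lattice_index \<delta> (Suc n)) - 1 / 2))"
    using assms by (simp add: boundary_def field_simps)
  then show ?thesis
    using half_odd_notin_dZ[OF assms(1), of "lattice_index \<delta> n + lattice_index \<delta> (Suc n)"] by simp
qed

definition cell :: "real \<Rightarrow> real \<Rightarrow> nat" where
  "cell \<delta> x = Max {n \<in> indices. boundary \<delta> n \<le> ereal x}"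

lemma finite_cell_candidates:
  assumes "0 < \<delta>"
  shows "finite {n \<in> indices. boundary \<delta> n \<le> ereal x}"
proof (rule finite_subset)
  define B where "B = nat \<lceil>x / (2 * \<delta>) - lattice_index \<delta> 2 + 2\<rceil>"
  show "{n \<in> indices. boundary \<delta> n \<le> ereal x} \<subseteq> {..max 1 B}"
  proof
    fix n assume "n \<in> {n \<in> indices. boundary \<delta> n \<le> ereal x}"
    then have n: "n \<in> indices" "boundary \<delta> n \<le> ereal x" by auto
    show "n \<in> {..max 1 B}"
    proof (cases "n \<le> 1")
      case False
      then have "\<delta> * of_int (2 * lattice_index \<delta> n) \<le> x" using n boundary_finite[of n \<delta>] by simp
      then have "lattice_index \<delta> n \<le> x / (2 * \<delta>)" using assms by (simp add: field_simps)
      moreover have "lattice_index \<delta> 2 + int n \<le> lattice_index \<delta> n + 2"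
        using n False by (intro lattice_index_ge) auto
      ultimately have "real n \<le> x / (2 * \<delta>) - lattice_index \<delta> 2 + 2" by linarith
      then show ?thesis unfolding B_def by simp linarith
    qed simp
  qed
qed simp

lemma cell_iff:
  assumes "0 < \<delta>"
  shows "cell \<delta> x = n \<longleftrightarrow> n \<in> indices \<and> boundary \<delta> n \<le> ereal x \<and> ereal x < boundary \<delta> (Suc n)"
proof -
  define S where "S = {n \<in> indices. boundary \<delta> n \<le> ereal x}"
  have S: "finite S" "1 \<in> S"
    using finite_cell_candidates[OF assms] one_in_indices by (auto simp: S_def boundary_def)
  have "ereal x < boundary \<delta> (Suc (Max S))"
  proof (cases "Suc (Max S) \<in> indices")
    case True
    then show ?thesis using Max_ge[OF S(1), of "Suc (Max S)"] by (force simp: S_def)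
  next
    case False
    then have "\<not> enat (Suc (Max S)) \<le> N" by simp
    moreover have "1 \<le> Max S" using Max_ge[OF S] .
    ultimately show ?thesis by (simp add: boundary_def)
  qed
  moreover have "Max S = n" if "n \<in> indices" "boundary \<delta> n \<le> ereal x" "ereal x < boundary \<delta> (Suc n)"
  proof (rule Max_eqI[OF S(1)])
    fix m assume "m \<in> S"
    show "m \<le> n"
    proof (rule ccontr)
      assume "\<not> m \<le> n"
      then have "boundary \<delta> (Suc n) \<le> boundary \<delta> m"
        using \<open>m \<in> S\<close> by (intro boundary_mono assms) (auto simp: S_def intro: order_trans)
      then show False using \<open>m \<in> S\<close> that by (auto simp: S_def)
    qed
  qed (use that in \<open>simp add: S_def\<close>)
  moreover have "Max S \<in> S" using S by (intro Max_in) auto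
  moreover have "cell \<delta> x = Max S" by (simp add: cell_def S_def)
  ultimately show ?thesis by (auto simp: S_def)
qed

lemma cell_bounds:
  "0 < \<delta> \<Longrightarrow>
    cell \<delta> x \<in> indices \<and> boundary \<delta> (cell \<delta> x) \<le> ereal x \<and> ereal x < boundary \<delta> (Suc (cell \<delta> x))"
  using cell_iff by blast

lemma prob_Z1_law_less:
  assumes "0 < \<delta>"
  shows "measure_pmf.prob (Z1_law \<delta>) {x. ereal x < ereal (\<delta> * of_int t)}
    = measure_pmf.prob (poisson_diff_pmf (beta_d \<delta>)) {..<t}"
proof -
  have "(\<lambda>w. \<delta> * of_int w) -` {x. ereal x < ereal (\<delta> * of_int t)} = {..<t}"
    using assms by auto
  then show ?thesis by (simp add: Z1_law_eq)
qed

definition mass_below :: "real \<Rightarrow> nat \<Rightarrow> real" where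
  "mass_below \<delta> n = measure_pmf.prob (Z1_law \<delta>) {x. ereal x < boundary \<delta> n}"

lemma mass_below_bounds:
  assumes d: "0 < \<delta>" and m: "1 \<le> m" "enat m \<le> N + 1"
  shows "cum m \<le> mass_below \<delta> m" and "mass_below \<delta> m \<le> cum m + (2 * real m + 2) * (4 * \<delta>)"
proof -
  have "m = 1 \<or> 2 \<le> m \<and> m \<in> indices \<or> N = enat (m - 1) \<and> 2 \<le> m"
    using m two_le_N enat_Suc_le_plus_1_iff[of "m - 1" N]
    by (cases N) (auto simp: numeral_eq_enat)
  then have "cum m \<le> mass_below \<delta> m \<and> mass_below \<delta> m \<le> cum m + (2 * real m + 2) * (4 * \<delta>)"
  proof (elim disjE conjE)
    assume "m = 1"
    then show ?thesis using d cum_1 boundary_1[of \<delta>] by (simp add: mass_below_def)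
  next
    assume "2 \<le> m" "m \<in> indices"
    then have "mass_below \<delta> m
        = measure_pmf.prob (Z1_law \<delta>) {x. ereal x < ereal (\<delta> * of_int (2 * lattice_index \<delta> m))}"
      unfolding mass_below_def by (simp only: boundary_finite)
    also have "\<dots> = measure_pmf.prob (poisson_diff_pmf (beta_d \<delta>))
        {..<2 * (even_quantile (poisson_diff_pmf (beta_d \<delta>)) (cum m) + int m)}"
      unfolding prob_Z1_law_less[OF d] lattice_index_def ..
    finally have "mass_below \<delta> m = \<dots>" .
    then show ?thesis
      using prob_lessThan_even_quantile_bounds[OF pmf_poisson_diff_beta_d_le[OF d]]
        cum_pos[OF \<open>2 \<le> m\<close>] cum_less_1[OF \<open>m \<in> indices\<close>] by simp
  next
    assume N: "N = enat (m - 1)" and "2 \<le> m"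
    then have "m - 1 + 1 = m" by simp
    then have "cum m = 1" and "boundary \<delta> m = \<infinity>"
      using cum_last[OF N] boundary_last[OF N, of \<delta>] by simp_all
    then show ?thesis using d by (simp add: mass_below_def)
  qed
  then show "cum m \<le> mass_below \<delta> m" "mass_below \<delta> m \<le> cum m + (2 * real m + 2) * (4 * \<delta>)"
    by auto
qed

definition approx :: "real \<Rightarrow> nat pmf" where
  "approx \<delta> = map_pmf (cell \<delta>) (Z1_law \<delta>)"

lemma set_pmf_approx: "0 < \<delta> \<Longrightarrow> set_pmf (approx \<delta>) \<subseteq> indices"
  using cell_bounds by (auto simp: approx_def)

lemma pmf_approx:
  assumes "0 < \<delta>" "n \<in> indices"
  shows "pmf (approx \<delta>) n
    = measure_pmf.prob (Z1_law \<delta>) {x. boundary \<delta> n \<le> ereal x \<and> ereal x < boundary \<delta> (Suc n)}"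
proof -
  have "cell \<delta> -` {n} = {x. boundary \<delta> n \<le> ereal x \<and> ereal x < boundary \<delta> (Suc n)}"
    using cell_iff[OF assms(1)] assms(2) by auto
  then show ?thesis by (simp add: approx_def pmf_map)
qed

lemma pmf_approx_eq_diff:
  assumes d: "0 < \<delta>" and n: "n \<in> indices"
  shows "pmf (approx \<delta>) n = mass_below \<delta> (Suc n) - mass_below \<delta> n"
proof -
  have le: "boundary \<delta> n \<le> boundary \<delta> (Suc n)"
    using n by (intro boundary_mono[OF d]) (auto simp: enat_Suc_le_plus_1_iff)
  then have "{x. boundary \<delta> n \<le> ereal x \<and> ereal x < boundary \<delta> (Suc n)}
      = {x. ereal x < boundary \<delta> (Suc n)} - {x. ereal x < boundary \<delta> n}"
    by auto
  moreover have "{x. ereal x < boundary \<delta> n} \<subseteq> {x. ereal x < boundary \<delta> (Suc n)}"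
    using le by auto
  ultimately show ?thesis
    unfolding pmf_approx[OF d n] mass_below_def by (simp add: measure_pmf.finite_measure_Diff)
qed

lemma tendsto_pmf_approx: "((\<lambda>\<delta>. pmf (approx \<delta>) n) \<longlongrightarrow> pmf target n) (at_right 0)"
proof (rule LIM_zero_cancel, rule Lim_null_comparison)
  define C where "C = (2 * real (Suc n) + 2 + (2 * real n + 2)) * 4"
  show "((\<lambda>\<delta>. C * \<delta>) \<longlongrightarrow> 0) (at_right 0)"
    by (auto intro!: tendsto_eq_intros)
  show "\<forall>\<^sub>F \<delta> in at_right 0. norm (pmf (approx \<delta>) n - pmf target n) \<le> C * \<delta>"
    using eventually_at_right_less[of "0::real"]
  proof eventually_elim
    case (elim \<delta>)
    then have d: "0 < \<delta>" by simp
    show ?case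
    proof (cases "n \<in> indices")
      case False
      then have "pmf (approx \<delta>) n = 0" using set_pmf_approx[OF d] by (auto simp: set_pmf_iff)
      moreover have "pmf target n = 0" using False by (auto simp: pmf_target)
      ultimately show ?thesis using d by (simp add: C_def)
    next
      case True
      then have "enat (Suc n) \<le> N + 1" "enat n \<le> N + 1"
        by (auto simp: enat_Suc_le_plus_1_iff intro: order_trans)
      then show ?thesis
        using True mass_below_bounds[OF d, of n] mass_below_bounds[OF d, of "Suc n"]
        unfolding pmf_approx_eq_diff[OF d True] pmf_target[symmetric]
        by (simp add: cum_Suc abs_le_iff C_def algebra_simps)
    qed
  qed
qed

lemma cells_cover_lattice:
  assumes "0 < \<delta>"
  shows "(\<Union>n\<in>indices. {x \<in> dZ \<delta> \<union> {-\<infinity>}. boundary \<delta> n \<le> x \<and> x < boundary \<delta> (Suc n)}) = dZ \<delta> \<union> {-\<infinity>}"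
proof (intro equalityI subsetI)
  fix x assume x: "x \<in> dZ \<delta> \<union> {-\<infinity>}"
  show "x \<in> (\<Union>n\<in>indices. {x \<in> dZ \<delta> \<union> {-\<infinity>}. boundary \<delta> n \<le> x \<and> x < boundary \<delta> (Suc n)})"
  proof (cases x)
    case (real r)
    then show ?thesis using x cell_bounds[OF assms, of r] by blast
  next
    case MInf
    have "boundary \<delta> 1 \<le> x" "x < boundary \<delta> (Suc 1)"
      using MInf two_in_indices by (simp_all add: boundary_def)
    then show ?thesis using x one_in_indices by blast
  qed (use x in \<open>auto simp: dZ_def\<close>)
qed auto

end

theorem lemma6p1:
  fixes M :: "'a measure" and X :: "'a \<Rightarrow> real"
    and N :: enat and v :: "nat \<Rightarrow> real" and p :: "nat \<Rightarrow> real"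
  assumes "prob_space M"
    and "X \<in> borel_measurable M"
    and "N \<ge> 1"
    and "strict_mono_on {n. 1 \<le> n \<and> enat n \<le> N} v"
    and "\<And>n. 1 \<le> n \<Longrightarrow> enat n \<le> N \<Longrightarrow> 0 < p n \<and> p n < 1"
    and "(p has_sum 1) {n. 1 \<le> n \<and> enat n \<le> N}"
    and "\<And>n. 1 \<le> n \<Longrightarrow> enat n \<le> N \<Longrightarrow> measure M {\<omega> \<in> space M. X \<omega> = v n} = p n"
  shows "\<exists>(q :: real \<Rightarrow> real pmf) (a :: real \<Rightarrow> nat \<Rightarrow> ereal).
    (\<forall>\<delta>>0.
       set_pmf (q \<delta>) \<subseteq> v ` {n. 1 \<le> n \<and> enat n \<le> N}
     \<and> (\<forall>n. 1 \<le> n \<and> enat n \<le> N + 1 \<longrightarrow> a \<delta> n \<in> dZ \<delta> \<union> {-\<infinity>, \<infinity>})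
     \<and> strict_mono_on {n. 1 \<le> n \<and> enat n \<le> N + 1} (a \<delta>)
     \<and> a \<delta> 1 = -\<infinity>
     \<and> (N \<noteq> \<infinity> \<longrightarrow> a \<delta> (the_enat N + 1) = \<infinity>)
     \<and> (\<Union>n\<in>{n. 1 \<le> n \<and> enat n \<le> N}. {x \<in> dZ \<delta> \<union> {-\<infinity>}. a \<delta> n \<le> x \<and> x < a \<delta> (Suc n)})
         = dZ \<delta> \<union> {-\<infinity>}
     \<and> (\<forall>n. 1 \<le> n \<and> enat n \<le> N \<longrightarrow>
          pmf (q \<delta>) (v n) =
            measure_pmf.prob (Z1_law \<delta>) {x. a \<delta> n \<le> ereal x \<and> ereal x < a \<delta> (Suc n)})
     \<and> (\<forall>n. 1 \<le> n \<and> enat n \<le> N \<longrightarrow>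
          (a \<delta> n + a \<delta> (Suc n) - ereal \<delta>) / 2 \<notin> dZ \<delta>))
    \<and> conv_law (\<lambda>\<delta>. measure_pmf (q \<delta>)) (distr M borel X) (at_right 0)"
proof -
  interpret discrete_law N p
    using two_le_enat_of_has_sum[of N p] assms by unfold_locales auto
  have inj: "inj_on v indices"
    using assms(4) by (rule strict_mono_on_imp_inj_on)
  define q where "q \<delta> = map_pmf v (approx \<delta>)" for \<delta>
  have "distr M borel X = distr (measure_pmf target) borel v"
    using assms(1,2,7) inj by (intro distr_eq_distr_pmf) (auto simp: set_pmf_target pmf_target)
  then have "conv_law (\<lambda>\<delta>. measure_pmf (q \<delta>)) (distr M borel X) (at_right 0)"
    unfolding q_def by (simp add: conv_law_map_pmf tendsto_pmf_approx)
  moreover have "pmf (q \<delta>) (v n) = pmf (approx \<delta>) n" if "0 < \<delta>" "n \<in> indices" for \<delta> n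
    unfolding q_def using inj set_pmf_approx[OF that(1)] that(2) by (rule pmf_map_inj_on)
  moreover have "set_pmf (q \<delta>) \<subseteq> v ` indices" if "0 < \<delta>" for \<delta>
    using set_pmf_approx[OF that] by (auto simp: q_def)
  moreover have "boundary \<delta> (the_enat N + 1) = \<infinity>" if "N \<noteq> \<infinity>" for \<delta>
    using that boundary_last by (cases N) auto
  ultimately show ?thesis
    using boundary_in_lattice strict_mono_boundary boundary_1 cells_cover_lattice pmf_approx
      boundary_midpoint_notin_lattice
    by (intro exI[of _ q] exI[of _ boundary]) auto
qed

end
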